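(* Let $\mathbb{X}$ be a real reflexive Banach space, $\mathbb{Y}$ a real normed linear space, and $0\neq T\in\mathbb{K}(\mathbb{X},\mathbb{Y})$. Then the following are equivalent: (i) $T$ is a smooth point of $\mathbb{K}(\mathbb{X},\mathbb{Y})$. (ii) $M_T=\{\pm x_0\}$ for some $x_0\in S_{\mathbb{X}}$ and $Tx_0$ is a smooth point of $\mathbb{Y}$. (iii) For every $A\in\mathbb{K}(\mathbb{X},\mathbb{Y})$: $T\perp_B A$ if and only if for every semi-inner-product $[\cdot,\cdot]$ on $\mathbb{Y}$ compatible with the norm and every norming sequence $\{x_n\}$ for $T$, every subsequential limit of $\{[Ax_n,Tx_n]\}$ equals $0$.
   Context: All spaces are real. $\mathbb{K}(\mathbb{X},\mathbb{Y})$ is the space of compact linear operators with the operator norm; $S_{\mathbb{X}}$ is the unit sphere; $M_T=\{x\in S_{\mathbb{X}}:\|Tx\|=\|T\|\}$. A nonzero element $x$ of a normed space $\mathbb{Z}$ is smooth if there is a unique $f\in\mathbb{Z}^*$ with $\|f\|=1$ and $f(x)=\|x\|$. $x\perp_B y$ means $\|x+\lambda y\|\ge\|x\|$ for all $\lambda\in\mathbb{R}$. A norming sequence for $T$ is $\{x_n\}\subseteq S_{\mathbb{X}}$ with $\|Tx_n\|\to\|T\|$. A semi-inner-product on $\mathbb{Y}$ is a map $[\cdot,\cdot]:\mathbb{Y}\times\mathbb{Y}\to\mathbb{R}$, linear in the first variable, with $[x,x]>0$ for $x\ne0$, $|[x,y]|^2\le[x,x][y,y]$, $[x,\alpha y]=\alpha[x,y]$;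 compatible with the norm means $[x,x]=\|x\|^2$. *)

theory Defs
  imports "HOL-Analysis.Analysis"
begin

definition reflexive_space :: "'a::real_normed_vector itself \<Rightarrow> bool" where
  "reflexive_space _ \<longleftrightarrow>
     (\<forall>\<phi> :: ('a \<Rightarrow>\<^sub>L real) \<Rightarrow>\<^sub>L real. \<exists>x::'a. \<forall>f. blinfun_apply \<phi> f = blinfun_apply f x)"

definition compact_ops :: "('a::real_normed_vector \<Rightarrow>\<^sub>L 'b::real_normed_vector) set" where
  "compact_ops = {T. compact (closure (blinfun_apply T ` ball 0 1))}"

definition support_functional_on :: "'z::real_normed_vector set \<Rightarrow> 'z \<Rightarrow> ('z \<Rightarrow> real) \<Rightarrow> bool" where
  "support_functional_on S x f \<longleftrightarrow>
     (\<forall>u\<in>S. \<forall>v\<in>S. f (u + v) = f u + f v) \<and>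
     (\<forall>u\<in>S. \<forall>c. f (c *\<^sub>R u) = c * f u) \<and>
     (\<exists>C. \<forall>u\<in>S. \<bar>f u\<bar> \<le> C * norm u) \<and>
     (SUP u\<in>{u\<in>S. norm u = 1}. \<bar>f u\<bar>) = 1 \<and>
     f x = norm x"

definition smooth_point_in :: "'z::real_normed_vector set \<Rightarrow> 'z \<Rightarrow> bool" where
  "smooth_point_in S x \<longleftrightarrow> x \<in> S \<and> x \<noteq> 0 \<and>
     (\<exists>f. support_functional_on S x f) \<and>
     (\<forall>f g. support_functional_on S x f \<longrightarrow> support_functional_on S x g \<longrightarrow> (\<forall>u\<in>S. f u = g u))"

definition birkhoff_orth :: "'z::real_normed_vector \<Rightarrow> 'z \<Rightarrow> bool" where
  "birkhoff_orth x y \<longleftrightarrow> (\<forall>t::real. norm (x + t *\<^sub>R y) \<ge> norm x)"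

definition norm_attain_set :: "('a::real_normed_vector \<Rightarrow>\<^sub>L 'b::real_normed_vector) \<Rightarrow> 'a set" where
  "norm_attain_set T = {x. norm x = 1 \<and> norm (T x) = norm T}"

definition norming_seq :: "('a::real_normed_vector \<Rightarrow>\<^sub>L 'b::real_normed_vector) \<Rightarrow> (nat \<Rightarrow> 'a) \<Rightarrow> bool" where
  "norming_seq T xs \<longleftrightarrow> (\<forall>n. norm (xs n) = 1) \<and> (\<lambda>n. norm (T (xs n))) \<longlonglongrightarrow> norm T"

definition compatible_sip :: "('b::real_normed_vector \<Rightarrow> 'b \<Rightarrow> real) \<Rightarrow> bool" where
  "compatible_sip s \<longleftrightarrow>
     (\<forall>x y z. s (x + y) z = s x z + s y z) \<and>
     (\<forall>c x y. s (c *\<^sub>R x) y = c * s x y) \<and>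
     (\<forall>x. x \<noteq> 0 \<longrightarrow> s x x > 0) \<and>
     (\<forall>x y. (s x y)\<^sup>2 \<le> s x x * s y y) \<and>
     (\<forall>c x y. s x (c *\<^sub>R y) = c * s x y) \<and>
     (\<forall>x. s x x = (norm x)\<^sup>2)"

definition subseq_limit :: "(nat \<Rightarrow> real) \<Rightarrow> real \<Rightarrow> bool" where
  "subseq_limit a l \<longleftrightarrow> (\<exists>r. strict_mono r \<and> (a \<circ> r) \<longlonglongrightarrow> l)"

end

theory Submission
  imports Defs
begin

text \<open>On a reflexive space a norming sequence of a compact operator \<open>T\<close> has a subsequence
  converging weakly to a point of \<open>M\<^sub>T\<close>, where the images converge in norm. Every
  \<open>x \<in> M\<^sub>T\<close> with a support functional \<open>f\<close> at \<open>T x\<close> gives the support functional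
  \<open>A \<mapsto> f (A x)\<close> of \<open>T\<close> in \<open>\<bbbK>(\<bbbX>, \<bbbY>)\<close>; testing against rank-one operators shows that uniqueness
  of these forces \<open>M\<^sub>T = {\<plusminus>x0}\<close> and smoothness of \<open>T x0\<close>. Conversely, if \<open>F\<close> supports \<open>T\<close> then
  \<open>\<parallel>T + t A\<parallel> \<ge> \<parallel>T\<parallel> + t F A\<close>; near-maximisers of \<open>T + t A\<close> form a norming sequence of \<open>T\<close>,
  and since support functionals depend weak* continuously on the point at the smooth point
  \<open>T x0\<close>, this pins \<open>F A\<close> down to \<open>f0 (A x0)\<close>. The semi-inner-product condition is the same
  computation, because \<open>[\<cdot>, y]/\<parallel>y\<parallel>\<close> supports \<open>y\<close> and a semi-inner-product can be chosen through
  any given support functional at \<open>T x0\<close>.\<close>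

section \<open>Support functionals via Hahn--Banach\<close>

definition supporting_functional :: "'a::real_normed_vector \<Rightarrow> ('a \<Rightarrow> real) \<Rightarrow> bool" where
  "supporting_functional y f \<longleftrightarrow> bounded_linear f \<and> (\<forall>u. \<bar>f u\<bar> \<le> norm u) \<and> f y = norm y"

text \<open>Graphs of linear functionals on subspaces, dominated by the norm and normed at \<open>y\<close>.\<close>

definition norm_dominated_graph :: "'a::real_normed_vector \<Rightarrow> ('a \<times> real) set \<Rightarrow> bool" where
  "norm_dominated_graph y G \<longleftrightarrow> (0, 0) \<in> G
    \<and> (\<forall>u r v s. (u, r) \<in> G \<longrightarrow> (v, s) \<in> G \<longrightarrow> (u + v, r + s) \<in> G)
    \<and> (\<forall>u r c. (u, r) \<in> G \<longrightarrow> (c *\<^sub>R u, c * r) \<in> G)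
    \<and> (\<forall>u r s. (u, r) \<in> G \<longrightarrow> (u, s) \<in> G \<longrightarrow> r = s)
    \<and> (\<forall>u r. (u, r) \<in> G \<longrightarrow> r \<le> norm u) \<and> (y, norm y) \<in> G"

lemma norm_dominated_graphD:
  assumes "norm_dominated_graph y G"
  shows "(0, 0) \<in> G" "\<And>u r v s. (u, r) \<in> G \<Longrightarrow> (v, s) \<in> G \<Longrightarrow> (u + v, r + s) \<in> G"
    "\<And>u r c. (u, r) \<in> G \<Longrightarrow> (c *\<^sub>R u, c * r) \<in> G"
    "\<And>u r s. (u, r) \<in> G \<Longrightarrow> (u, s) \<in> G \<Longrightarrow> r = s"
    "\<And>u r. (u, r) \<in> G \<Longrightarrow> r \<le> norm u" "(y, norm y) \<in> G"
  using assms unfolding norm_dominated_graph_def by blast+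

lemma norm_dominated_graph_line: "norm_dominated_graph y {(a *\<^sub>R y, a * norm y) | a. True}"
  (is "norm_dominated_graph y ?L")
  unfolding norm_dominated_graph_def
proof (intro conjI allI impI)
  show "(0, 0) \<in> ?L" "(y, norm y) \<in> ?L" by (auto intro: exI[of _ 0] exI[of _ 1])
next
  fix u r v s assume "(u, r) \<in> ?L" "(v, s) \<in> ?L"
  then obtain a b where "u = a *\<^sub>R y" "r = a * norm y" "v = b *\<^sub>R y" "s = b * norm y" by blast
  then show "(u + v, r + s) \<in> ?L" by (intro CollectI exI[of _ "a + b"]) (simp add: algebra_simps)
next
  fix u r and c :: real assume "(u, r) \<in> ?L"
  then obtain a where "u = a *\<^sub>R y" "r = a * norm y" by blast
  then show "(c *\<^sub>R u, c * r) \<in> ?L" by (intro CollectI exI[of _ "c * a"]) simp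
next
  fix u r s assume "(u, r) \<in> ?L" "(u, s) \<in> ?L"
  then obtain a b where "u = a *\<^sub>R y" "r = a * norm y" "u = b *\<^sub>R y" "s = b * norm y" by blast
  then show "r = s" by (cases "y = 0") (auto simp: scaleR_cancel_right)
next
  fix u r assume "(u, r) \<in> ?L"
  then show "r \<le> norm u" by (auto simp: mult_right_mono)
qed

lemma norm_dominated_graph_Union_chain:
  assumes C: "C \<in> chains {G. norm_dominated_graph y G}" "C \<noteq> {}"
  shows "norm_dominated_graph y (\<Union>C)"
proof -
  have dom: "\<And>G. G \<in> C \<Longrightarrow> norm_dominated_graph y G"
    using chainsD2[OF C(1)] by auto
  have two: "\<exists>G\<in>C. (u, r) \<in> G \<and> (v, s) \<in> G" if "(u, r) \<in> \<Union>C" "(v, s) \<in> \<Union>C" for u r v s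
    using that chainsD[OF C(1)] by blast
  obtain G0 where "G0 \<in> C" using C(2) by blast
  show ?thesis
    unfolding norm_dominated_graph_def
  proof (intro conjI allI impI)
    show "(0, 0) \<in> \<Union>C" "(y, norm y) \<in> \<Union>C"
      using \<open>G0 \<in> C\<close> norm_dominated_graphD(1,6)[OF dom] by blast+
  next
    fix u r v s assume "(u, r) \<in> \<Union>C" "(v, s) \<in> \<Union>C"
    then obtain G where "G \<in> C" "(u, r) \<in> G" "(v, s) \<in> G" using two by blast
    then show "(u + v, r + s) \<in> \<Union>C" using norm_dominated_graphD(2)[OF dom] by blast
  next
    fix u r and c :: real assume "(u, r) \<in> \<Union>C"
    then obtain G where "G \<in> C" "(u, r) \<in> G" by blast
    then show "(c *\<^sub>R u, c * r) \<in> \<Union>C" using norm_dominated_graphD(3)[OF dom] by blast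
  next
    fix u r s assume "(u, r) \<in> \<Union>C" "(u, s) \<in> \<Union>C"
    then obtain G where "G \<in> C" "(u, r) \<in> G" "(u, s) \<in> G" using two by blast
    then show "r = s" using norm_dominated_graphD(4)[OF dom] by blast
  next
    fix u r assume "(u, r) \<in> \<Union>C"
    then obtain G where "G \<in> C" "(u, r) \<in> G" by blast
    then show "r \<le> norm u" using norm_dominated_graphD(5)[OF dom] by blast
  qed
qed

lemma norm_dominated_graph_extension_value:
  assumes M: "norm_dominated_graph y M"
  shows "\<exists>c. \<forall>m r. (m, r) \<in> M \<longrightarrow> r - norm (m - v) \<le> c \<and> c \<le> norm (m + v) - r"
proof -
  note G = norm_dominated_graphD[OF M]
  have key: "r1 - norm (m1 - v) \<le> norm (m2 + v) - r2" if "(m1, r1) \<in> M" "(m2, r2) \<in> M"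
    for m1 r1 m2 r2
  proof -
    have "r1 + r2 \<le> norm ((m1 - v) + (m2 + v))" using G(5)[OF G(2)[OF that]] by simp
    also have "\<dots> \<le> norm (m1 - v) + norm (m2 + v)" by (rule norm_triangle_ineq)
    finally show ?thesis by simp
  qed
  define L where "L = {r - norm (m - v) | m r. (m, r) \<in> M}"
  have "L \<noteq> {}" using G(1) by (auto simp: L_def)
  moreover have "\<forall>l\<in>L. l \<le> norm (0 + v) - 0" using key[OF _ G(1)] by (auto simp: L_def)
  ultimately have "bdd_above L" by (auto intro: bdd_aboveI)
  show ?thesis
  proof (intro exI allI impI conjI)
    fix m r assume "(m, r) \<in> M"
    then show "r - norm (m - v) \<le> Sup L"
      by (intro cSup_upper \<open>bdd_above L\<close>) (auto simp: L_def)
    show "Sup L \<le> norm (m + v) - r"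
      using \<open>L \<noteq> {}\<close> key \<open>(m, r) \<in> M\<close> by (intro cSup_least) (auto simp: L_def)
  qed
qed

lemma norm_dominated_extension_bound:
  assumes M: "norm_dominated_graph y M" and m: "(m, r) \<in> M"
    and c: "\<And>m r. (m, r) \<in> M \<Longrightarrow> r - norm (m - v) \<le> c \<and> c \<le> norm (m + v) - r"
  shows "r + a * c \<le> norm (m + a *\<^sub>R v)"
proof (cases a "0::real" rule: linorder_cases)
  case equal
  then show ?thesis using norm_dominated_graphD(5)[OF M m] by simp
next
  case greater
  have "c \<le> norm ((1 / a) *\<^sub>R m + v) - (1 / a) * r"
    using c[OF norm_dominated_graphD(3)[OF M m]] by blast
  then have "a * c \<le> a * (norm ((1 / a) *\<^sub>R m + v) - (1 / a) * r)"
    using greater by (simp add: mult_left_mono)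
  also have "\<dots> = norm (a *\<^sub>R ((1 / a) *\<^sub>R m + v)) - r"
    using greater by (simp add: right_diff_distrib)
  also have "a *\<^sub>R ((1 / a) *\<^sub>R m + v) = m + a *\<^sub>R v"
    using greater by (simp add: scaleR_add_right)
  finally show ?thesis by simp
next
  case less
  define b where "b = - a"
  have b: "b > 0" using less by (simp add: b_def)
  have "(1 / b) * r - norm ((1 / b) *\<^sub>R m - v) \<le> c"
    using c[OF norm_dominated_graphD(3)[OF M m]] by blast
  then have "b * ((1 / b) * r - norm ((1 / b) *\<^sub>R m - v)) \<le> b * c"
    using b by (simp add: mult_left_mono)
  moreover have "b * ((1 / b) * r - norm ((1 / b) *\<^sub>R m - v)) = r - norm (b *\<^sub>R ((1 / b) *\<^sub>R m - v))"
    using b by (simp add: right_diff_distrib)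
  moreover have "b *\<^sub>R ((1 / b) *\<^sub>R m - v) = m + a *\<^sub>R v"
    using b by (simp add: scaleR_diff_right b_def)
  ultimately have "r - norm (m + a *\<^sub>R v) \<le> b * c" by simp
  then show ?thesis by (simp add: b_def)
qed

lemma norm_dominated_graph_adjoin:
  assumes M: "norm_dominated_graph y M" and v: "\<forall>r. (v, r) \<notin> M"
    and c: "\<And>m r. (m, r) \<in> M \<Longrightarrow> r - norm (m - v) \<le> c \<and> c \<le> norm (m + v) - r"
  shows "norm_dominated_graph y {(m + a *\<^sub>R v, r + a * c) | m r a. (m, r) \<in> M}"
    (is "norm_dominated_graph y ?N")
proof -
  note G = norm_dominated_graphD[OF M]
  define N where "N = ?N"
  have "norm_dominated_graph y N"
    unfolding norm_dominated_graph_def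
  proof (intro conjI allI impI)
    show "(0, 0) \<in> N" "(y, norm y) \<in> N" unfolding N_def using G(1,6) by force+
  next
    fix u r w s assume "(u, r) \<in> N" "(w, s) \<in> N"
    then obtain m1 r1 a1 m2 r2 a2 where "(m1, r1) \<in> M" "(m2, r2) \<in> M"
      "u = m1 + a1 *\<^sub>R v" "r = r1 + a1 * c" "w = m2 + a2 *\<^sub>R v" "s = r2 + a2 * c"
      unfolding N_def by blast
    then show "(u + w, r + s) \<in> N" unfolding N_def
      by (intro CollectI exI[of _ "m1 + m2"] exI[of _ "r1 + r2"] exI[of _ "a1 + a2"])
         (auto intro: G(2) simp: algebra_simps)
  next
    fix u r and d :: real assume "(u, r) \<in> N"
    then obtain m r1 a where "(m, r1) \<in> M" "u = m + a *\<^sub>R v" "r = r1 + a * c"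
      unfolding N_def by blast
    then show "(d *\<^sub>R u, d * r) \<in> N" unfolding N_def
      by (intro CollectI exI[of _ "d *\<^sub>R m"] exI[of _ "d * r1"] exI[of _ "d * a"])
         (auto intro: G(3) simp: algebra_simps)
  next
    fix u r s assume "(u, r) \<in> N" "(u, s) \<in> N"
    then obtain m1 r1 a1 m2 r2 a2 where h: "(m1, r1) \<in> M" "(m2, r2) \<in> M"
      "u = m1 + a1 *\<^sub>R v" "r = r1 + a1 * c" "u = m2 + a2 *\<^sub>R v" "s = r2 + a2 * c"
      unfolding N_def by blast
    have d: "(m1 - m2, r1 - r2) \<in> M" using G(2)[OF h(1) G(3)[OF h(2), of "-1"]] by simp
    have "a1 = a2"
    proof (rule ccontr)
      assume "a1 \<noteq> a2"
      moreover have "m1 - m2 = (a2 - a1) *\<^sub>R v" using h(3,5) by (simp add: algebra_simps)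
      ultimately have "v = (1 / (a2 - a1)) *\<^sub>R (m1 - m2)" by simp
      then show False using G(3)[OF d, of "1 / (a2 - a1)"] v by metis
    qed
    then show "r = s" using h G(4) by auto
  next
    fix u r assume "(u, r) \<in> N"
    then obtain m r1 a where "(m, r1) \<in> M" "u = m + a *\<^sub>R v" "r = r1 + a * c"
      unfolding N_def by blast
    then show "r \<le> norm u" using norm_dominated_extension_bound[OF M _ c] by simp
  qed
  then show ?thesis by (simp add: N_def)
qed

lemma norm_dominated_graph_extend:
  assumes M: "norm_dominated_graph y M" and v: "\<forall>r. (v, r) \<notin> M"
  shows "\<exists>G. norm_dominated_graph y G \<and> M \<subset> G"
proof -
  obtain c where c: "\<And>m r. (m, r) \<in> M \<Longrightarrow> r - norm (m - v) \<le> c \<and> c \<le> norm (m + v) - r"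
    using norm_dominated_graph_extension_value[OF M] by blast
  define N where "N = {(m + a *\<^sub>R v, r + a * c) | m r a. (m, r) \<in> M}"
  have "norm_dominated_graph y N"
    unfolding N_def using M v c by (rule norm_dominated_graph_adjoin)
  moreover have "M \<subseteq> N"
  proof
    fix p assume "p \<in> M"
    moreover obtain m r where "p = (m, r)" by fastforce
    ultimately show "p \<in> N" unfolding N_def
      by (intro CollectI exI[of _ m] exI[of _ r] exI[of _ 0]) simp
  qed
  moreover have "(v, c) \<in> N" unfolding N_def
    by (intro CollectI exI[of _ 0] exI[of _ 0] exI[of _ 1]) (simp add: norm_dominated_graphD(1)[OF M])
  ultimately show ?thesis using v by blast
qed

lemma supporting_functional_exists:
  fixes y :: "'a::real_normed_vector"
  shows "\<exists>f. supporting_functional y f"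
proof -
  have "\<forall>C\<in>chains {G. norm_dominated_graph y G}. \<exists>U\<in>{G. norm_dominated_graph y G}. \<forall>X\<in>C. X \<subseteq> U"
  proof
    fix C assume C: "C \<in> chains {G. norm_dominated_graph y G}"
    show "\<exists>U\<in>{G. norm_dominated_graph y G}. \<forall>X\<in>C. X \<subseteq> U"
    proof (cases "C = {}")
      case True
      then show ?thesis using norm_dominated_graph_line[of y] by blast
    next
      case False
      then show ?thesis using norm_dominated_graph_Union_chain[OF C] by blast
    qed
  qed
  from Zorn_Lemma2[OF this] obtain M where M: "norm_dominated_graph y M"
    and max: "\<And>G. norm_dominated_graph y G \<Longrightarrow> M \<subseteq> G \<Longrightarrow> G = M"
    by blast
  note G = norm_dominated_graphD[OF M]
  have total: "\<exists>r. (v, r) \<in> M" for v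
    using norm_dominated_graph_extend[OF M] max by blast
  define f where "f v = (THE r. (v, r) \<in> M)" for v
  have graph: "(v, f v) \<in> M" for v
  proof -
    obtain r where "(v, r) \<in> M" using total by blast
    moreover from this have "f v = r" unfolding f_def using G(4) by blast
    ultimately show ?thesis by simp
  qed
  have f: "(v, r) \<in> M \<Longrightarrow> f v = r" for v r using G(4) graph by blast
  have add: "f (u + v) = f u + f v" for u v using f[OF G(2)[OF graph graph]] .
  have scale: "f (c *\<^sub>R u) = c * f u" for c u using f[OF G(3)[OF graph]] .
  have le: "f u \<le> norm u" for u using G(5)[OF graph] .
  have abs: "\<bar>f u\<bar> \<le> norm u" for u
    using le[of u] le[of "-u"] scale[of "-1" u] by simp
  have "bounded_linear f"
    by (rule bounded_linear_intro[where K = 1]) (use add scale abs in auto)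
  then show ?thesis using abs f[OF G(6)] unfolding supporting_functional_def by blast
qed

lemma supporting_functionalD:
  assumes "supporting_functional y f"
  shows "bounded_linear f" "\<bar>f u\<bar> \<le> norm u" "f y = norm y"
  using assms unfolding supporting_functional_def by blast+

lemma supporting_functional_linear:
  assumes "supporting_functional y f"
  shows "f (u + v) = f u + f v" "f (c *\<^sub>R u) = c * f u" "f (- u) = - f u" "f (u - v) = f u - f v"
    "f 0 = 0"
proof -
  have "linear f" using supporting_functionalD(1)[OF assms] by (rule bounded_linear.linear)
  then show "f (u + v) = f u + f v" "f (c *\<^sub>R u) = c * f u" "f (- u) = - f u" "f (u - v) = f u - f v"
    "f 0 = 0"
    by (simp_all add: linear_add linear_scale linear_neg linear_diff linear_0)
qed

lemma supporting_functional_scaleR: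
  assumes f: "supporting_functional y f" and "c \<noteq> 0"
  shows "supporting_functional (c *\<^sub>R y) (\<lambda>u. sgn c * f u)"
  unfolding supporting_functional_def
proof (intro conjI allI)
  show "bounded_linear (\<lambda>u. sgn c * f u)"
    using bounded_linear_mult_right supporting_functionalD(1)[OF f] by (rule bounded_linear_compose)
  show "\<bar>sgn c * f u\<bar> \<le> norm u" for u
    using supporting_functionalD(2)[OF f, of u] \<open>c \<noteq> 0\<close> by (simp add: abs_mult abs_sgn_eq)
  show "sgn c * f (c *\<^sub>R y) = norm (c *\<^sub>R y)"
    using supporting_functional_linear(2)[OF f] supporting_functionalD(3)[OF f]
    by (simp add: sgn_if abs_if)
qed

lemma bounded_linear_functionals_separate:
  fixes a b :: "'a::real_normed_vector"
  assumes "\<And>\<psi>. bounded_linear \<psi> \<Longrightarrow> \<psi> a = (\<psi> b :: real)"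
  shows "a = b"
proof -
  obtain f where f: "supporting_functional (a - b) f" using supporting_functional_exists by blast
  have "f (a - b) = 0"
    using assms[OF supporting_functionalD(1)[OF f]] supporting_functional_linear(4)[OF f] by simp
  then show ?thesis using supporting_functionalD(3)[OF f] by simp
qed

lemma separating_functional:
  fixes x1 x2 :: "'a::real_normed_vector"
  assumes "norm x1 = 1" "norm x2 = 1" "x2 \<notin> {x1, - x1}"
  shows "\<exists>\<phi>. bounded_linear \<phi> \<and> \<phi> x1 = 0 \<and> \<phi> x2 = (1::real)"
proof -
  obtain \<psi>1 where \<psi>1: "supporting_functional x1 \<psi>1" using supporting_functional_exists by blast
  define d where "d = x2 - \<psi>1 x2 *\<^sub>R x1"
  have "d \<noteq> 0"
  proof
    assume "d = 0"
    then have x2: "x2 = \<psi>1 x2 *\<^sub>R x1" by (simp add: d_def)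
    then have "\<bar>\<psi>1 x2\<bar> = 1" using assms(1,2) by (metis mult.right_neutral norm_scaleR)
    then show False using x2 assms(3) by (auto simp: abs_if split: if_splits)
  qed
  obtain \<psi> where \<psi>: "supporting_functional d \<psi>" using supporting_functional_exists by blast
  define \<phi> where "\<phi> u = \<psi> (u - \<psi>1 u *\<^sub>R x1) / norm d" for u
  have "bounded_linear (\<lambda>u. \<psi>1 u *\<^sub>R x1)"
    using bounded_linear_compose[OF bounded_linear_scaleR_left supporting_functionalD(1)[OF \<psi>1]] .
  then have "bounded_linear (\<lambda>u. u - \<psi>1 u *\<^sub>R x1)"
    by (rule bounded_linear_sub[OF bounded_linear_ident])
  then have "bounded_linear (\<lambda>u. \<psi> (u - \<psi>1 u *\<^sub>R x1))"
    by (rule bounded_linear_compose[OF supporting_functionalD(1)[OF \<psi>]])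
  then have "bounded_linear \<phi>"
    unfolding \<phi>_def by (rule bounded_linear_compose[OF bounded_linear_divide])
  moreover have "\<phi> x1 = 0"
    using supporting_functionalD(3)[OF \<psi>1] supporting_functional_linear(5)[OF \<psi>] assms(1)
    by (simp add: \<phi>_def)
  moreover have "\<phi> x2 = 1"
    using supporting_functionalD(3)[OF \<psi>] \<open>d \<noteq> 0\<close> by (simp add: \<phi>_def d_def[symmetric])
  ultimately show ?thesis by blast
qed

definition supporting_functional_on :: "'z::real_normed_vector set \<Rightarrow> 'z \<Rightarrow> ('z \<Rightarrow> real) \<Rightarrow> bool" where
  "supporting_functional_on S x f \<longleftrightarrow>
     (\<forall>u\<in>S. \<forall>v\<in>S. f (u + v) = f u + f v) \<and> (\<forall>u\<in>S. \<forall>c. f (c *\<^sub>R u) = c * f u)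
     \<and> (\<forall>u\<in>S. \<bar>f u\<bar> \<le> norm u) \<and> f x = norm x"

lemma support_functional_on_iff:
  assumes cone: "\<And>u c. u \<in> S \<Longrightarrow> c *\<^sub>R u \<in> S" and x: "x \<in> S" "x \<noteq> 0"
  shows "support_functional_on S x f \<longleftrightarrow> supporting_functional_on S x f"
proof
  assume h: "support_functional_on S x f"
  then obtain C where C: "\<forall>u\<in>S. \<bar>f u\<bar> \<le> C * norm u" unfolding support_functional_on_def by blast
  have scale: "\<forall>u\<in>S. \<forall>c. f (c *\<^sub>R u) = c * f u"
    and sup: "(SUP u\<in>{u\<in>S. norm u = 1}. \<bar>f u\<bar>) = 1"
    using h unfolding support_functional_on_def by blast+
  have bdd: "bdd_above ((\<lambda>u. \<bar>f u\<bar>) ` {u\<in>S. norm u = 1})"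
    using C by (intro bdd_aboveI[of _ C]) auto
  have "\<bar>f u\<bar> \<le> norm u" if u: "u \<in> S" for u
  proof (cases "u = 0")
    case True
    then show ?thesis using scale u by (metis abs_zero mult_zero_left norm_zero order_refl scaleR_zero_left)
  next
    case False
    have "sgn u \<in> {u\<in>S. norm u = 1}" using cone[OF u] False by (simp add: sgn_div_norm norm_sgn)
    then have "\<bar>f (sgn u)\<bar> \<le> 1" using cSUP_upper[OF _ bdd] sup by fastforce
    moreover have "f (sgn u) = f u / norm u"
      using scale u by (simp add: sgn_div_norm divide_inverse mult.commute)
    ultimately show ?thesis using False by (simp add: divide_le_eq)
  qed
  then show "supporting_functional_on S x f"
    using h unfolding support_functional_on_def supporting_functional_on_def by blast
next
  assume h: "supporting_functional_on S x f"
  have scale: "\<forall>u\<in>S. \<forall>c. f (c *\<^sub>R u) = c * f u" and bound: "\<forall>u\<in>S. \<bar>f u\<bar> \<le> norm u"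
    and val: "f x = norm x"
    using h unfolding supporting_functional_on_def by blast+
  have unit: "sgn x \<in> {u\<in>S. norm u = 1}" using cone[OF x(1)] x by (simp add: sgn_div_norm norm_sgn)
  have one: "\<bar>f (sgn x)\<bar> = 1" using scale val x by (simp add: sgn_div_norm)
  have bdd: "bdd_above ((\<lambda>u. \<bar>f u\<bar>) ` {u\<in>S. norm u = 1})"
    using bound by (intro bdd_aboveI[of _ 1]) auto
  have "(SUP u\<in>{u\<in>S. norm u = 1}. \<bar>f u\<bar>) = 1"
  proof (rule antisym)
    show "(SUP u\<in>{u\<in>S. norm u = 1}. \<bar>f u\<bar>) \<le> 1"
      by (rule cSUP_least) (use unit bound in auto)
    show "1 \<le> (SUP u\<in>{u\<in>S. norm u = 1}. \<bar>f u\<bar>)"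
      using cSUP_upper[OF unit bdd] one by simp
  qed
  moreover have "\<forall>u\<in>S. \<bar>f u\<bar> \<le> 1 * norm u" using bound by simp
  ultimately show "support_functional_on S x f"
    using h unfolding support_functional_on_def supporting_functional_on_def by blast
qed

lemma supporting_functional_on_UNIV: "supporting_functional_on UNIV y f \<longleftrightarrow> supporting_functional y f"
proof
  assume h: "supporting_functional_on UNIV y f"
  then have "bounded_linear f" unfolding supporting_functional_on_def
    by (intro bounded_linear_intro[where K = 1]) auto
  then show "supporting_functional y f"
    using h unfolding supporting_functional_on_def supporting_functional_def by auto
next
  assume "supporting_functional y f"
  then show "supporting_functional_on UNIV y f"
    unfolding supporting_functional_on_def
    using supporting_functional_linear(1,2) supporting_functionalD(2,3) by blast
qed

lemma smooth_point_in_UNIV_iff: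
  "smooth_point_in UNIV y \<longleftrightarrow>
     y \<noteq> 0 \<and> (\<forall>f g. supporting_functional y f \<longrightarrow> supporting_functional y g \<longrightarrow> f = g)"
proof (cases "y = 0")
  case False
  then have e: "support_functional_on UNIV y f \<longleftrightarrow> supporting_functional y f" for f
    using support_functional_on_iff[of UNIV y f] supporting_functional_on_UNIV by simp
  show ?thesis
    unfolding smooth_point_in_def e using False supporting_functional_exists by (auto simp: fun_eq_iff)
qed (simp add: smooth_point_in_def)

section \<open>Semi-inner-products compatible with the norm\<close>

lemma compatible_sipD:
  assumes "compatible_sip s"
  shows "s (u + v) y = s u y + s v y" "s (c *\<^sub>R u) y = c * s u y" "s u (c *\<^sub>R y) = c * s u y"
    "s y y = (norm y)\<^sup>2"
  using assms unfolding compatible_sip_def by blast+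

lemma compatible_sip_Cauchy_Schwarz:
  assumes "compatible_sip s"
  shows "\<bar>s u y\<bar> \<le> norm u * norm y"
proof -
  have "(s u y)\<^sup>2 \<le> (norm u * norm y)\<^sup>2"
    using assms unfolding compatible_sip_def by (metis power_mult_distrib)
  then have "\<bar>s u y\<bar> \<le> \<bar>norm u * norm y\<bar>" by (simp only: abs_le_square_iff)
  then show ?thesis by simp
qed

lemma compatible_sip_supporting_functional:
  assumes s: "compatible_sip s"
  shows "supporting_functional y (\<lambda>u. s u y / norm y)"
proof -
  have bound: "\<bar>s u y / norm y\<bar> \<le> norm u" for u
    using compatible_sip_Cauchy_Schwarz[OF s, of u y]
    by (cases "y = 0") (simp_all add: abs_div divide_le_eq)
  have "bounded_linear (\<lambda>u. s u y / norm y)"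
    by (rule bounded_linear_intro[where K = 1])
       (use bound compatible_sipD(1,2)[OF s] in \<open>simp_all add: add_divide_distrib\<close>)
  moreover have "s y y / norm y = norm y"
    using compatible_sipD(4)[OF s] by (simp add: power2_eq_square)
  ultimately show ?thesis using bound unfolding supporting_functional_def by blast
qed

lemma compatible_sip_of_support_selection:
  fixes G :: "'b::real_normed_vector \<Rightarrow> 'b \<Rightarrow> real"
  assumes G: "\<And>u. supporting_functional u (G u)"
    and odd: "\<And>u x. u \<noteq> 0 \<Longrightarrow> G (- u) x = - G u x"
  shows "compatible_sip (\<lambda>x y. norm y * G (sgn y) x)"
    (is "compatible_sip ?s")
proof -
  note lin = supporting_functional_linear[OF G]
  have sxx: "?s x x = (norm x)\<^sup>2" for x
  proof (cases "x = 0")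
    case False
    have "G (sgn x) x = G (sgn x) (norm x *\<^sub>R sgn x)" using False by (simp add: sgn_div_norm)
    also have "\<dots> = norm x" using lin(2) supporting_functionalD(3)[OF G] False by (simp add: norm_sgn)
    finally show ?thesis by (simp add: power2_eq_square)
  qed simp
  have bound: "\<bar>?s x y\<bar> \<le> norm x * norm y" for x y
    using mult_left_mono[OF supporting_functionalD(2)[OF G, of "sgn y" x] norm_ge_zero[of y]]
    by (simp add: abs_mult mult.commute)
  have hom: "?s x (c *\<^sub>R y) = c * ?s x y" for c x y
  proof (cases "c = 0 \<or> y = 0")
    case False
    then have "sgn y \<noteq> 0" by (simp add: sgn_zero_iff)
    then show ?thesis
      using False odd[of "sgn y" x] by (cases "c > 0") (auto simp: sgn_scaleR sgn_if)
  qed auto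
  show ?thesis
    unfolding compatible_sip_def
  proof (intro conjI allI impI)
    fix x y :: 'b
    have "(?s x y)\<^sup>2 = \<bar>?s x y\<bar>\<^sup>2" by simp
    also have "\<dots> \<le> (norm x * norm y)\<^sup>2" by (rule power_mono[OF bound]) simp
    also have "\<dots> = ?s x x * ?s y y" using sxx by (simp add: power_mult_distrib)
    finally show "(?s x y)\<^sup>2 \<le> ?s x x * ?s y y" .
  qed (use sxx hom lin in \<open>auto simp: algebra_simps\<close>)
qed

lemma compatible_sip_exists:
  fixes y0 :: "'b::real_normed_vector"
  assumes y0: "y0 \<noteq> 0" and g0: "supporting_functional y0 g0"
  shows "\<exists>s. compatible_sip s \<and> (\<forall>u. s u y0 = norm y0 * g0 u)"
proof -
  define e0 where "e0 = sgn y0"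
  have "supporting_functional (inverse (norm y0) *\<^sub>R y0) (\<lambda>u. sgn (inverse (norm y0)) * g0 u)"
    using supporting_functional_scaleR[OF g0, of "inverse (norm y0)"] y0 by simp
  then have g0': "supporting_functional e0 g0" using y0 by (simp add: e0_def sgn_div_norm sgn_pos)
  obtain F :: "'b \<Rightarrow> 'b \<Rightarrow> real" where F: "\<And>u. supporting_functional u (F u)"
    using supporting_functional_exists by metis
  define F' where "F' u = (if u = e0 then g0 else F u)" for u
  have F': "supporting_functional u (F' u)" for u using F g0' by (simp add: F'_def)
  define pick where "pick u = (SOME v. v \<in> {u, - u} \<and> (e0 \<in> {u, - u} \<longrightarrow> v = e0))" for u
  have pick: "pick u \<in> {u, - u} \<and> (e0 \<in> {u, - u} \<longrightarrow> pick u = e0)" for u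
    unfolding pick_def by (rule someI[of _ "if e0 \<in> {u, - u} then e0 else u"]) auto
  have pick_neg: "pick (- u) = pick u" for u
    unfolding pick_def by (simp add: insert_commute)
  define G where "G u = (if pick u = u then F' u else (\<lambda>x. - F' (- u) x))" for u
  have "supporting_functional u (G u)" for u
    using F' supporting_functional_scaleR[OF F'[of "- u"], of "-1"] by (simp add: G_def)
  moreover have "G (- u) x = - G u x" if "u \<noteq> 0" for u x
  proof -
    have "u \<noteq> - u"
    proof
      assume "u = - u"
      then have "(2::real) *\<^sub>R u = 0" by (metis add.right_inverse scaleR_2)
      then show False using that by simp
    qed
    then show ?thesis using pick[of u] pick_neg[of u] by (auto simp: G_def)
  qed
  ultimately have "compatible_sip (\<lambda>x y. norm y * G (sgn y) x)"
    by (rule compatible_sip_of_support_selection)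
  moreover have "G e0 = g0" using pick[of e0] by (simp add: G_def F'_def)
  ultimately show ?thesis by (intro exI[of _ "\<lambda>x y. norm y * G (sgn y) x"]) (simp add: e0_def)
qed

section \<open>Pointwise cluster points of bounded sequences of functionals\<close>

definition pointwise_cluster :: "(nat \<Rightarrow> 'i \<Rightarrow> real) \<Rightarrow> ('i \<Rightarrow> real) \<Rightarrow> bool" where
  "pointwise_cluster h H \<longleftrightarrow>
     (\<forall>F e N. finite F \<longrightarrow> e > 0 \<longrightarrow> (\<exists>n\<ge>N. \<forall>i\<in>F. \<bar>h n i - H i\<bar> < e))"

text \<open>Tychonoff: the sequence lives in the compact product \<open>\<Pi> i. [-b i, b i]\<close>.\<close>

lemma pointwise_cluster_exists:
  fixes h :: "nat \<Rightarrow> 'i \<Rightarrow> real"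
  assumes b: "\<And>n i. \<bar>h n i\<bar> \<le> b i"
  shows "\<exists>H. pointwise_cluster h H"
proof -
  define K where "K = PiE UNIV (\<lambda>i. {-b i..b i})"
  have "compactin (product_topology (\<lambda>i. euclidean) UNIV) K"
    unfolding K_def compactin_PiE by auto
  then have "compact K" by (simp add: euclidean_product_topology)
  moreover have "eventually (\<lambda>x. x \<in> K) (filtermap h sequentially)"
  proof -
    have "\<forall>n. h n \<in> K" using b by (auto simp: K_def PiE_iff abs_le_iff) (metis minus_le_iff)
    then show ?thesis by (simp add: eventually_filtermap)
  qed
  moreover have "filtermap h sequentially \<noteq> bot" by (simp add: filtermap_bot_iff)
  ultimately obtain H where H: "inf (nhds H) (filtermap h sequentially) \<noteq> bot"
    unfolding compact_filter by blast
  show ?thesis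
    unfolding pointwise_cluster_def
  proof (intro exI[of _ H] allI impI, rule ccontr)
    fix F :: "'i set" and e :: real and N
    assume F: "finite F" "e > 0" and no: "\<not> (\<exists>n\<ge>N. \<forall>i\<in>F. \<bar>h n i - H i\<bar> < e)"
    define U where "U = (\<Inter>i\<in>F. (\<lambda>g. g i) -` ball (H i) e)"
    have "open ((\<lambda>g. g i) -` ball (H i) e)" for i
      using continuous_on_open_vimage[of UNIV "\<lambda>g::'i\<Rightarrow>real. g i"]
        continuous_on_product_coordinates by auto
    then have "open U" unfolding U_def using F by (intro open_INT) auto
    moreover have "H \<in> U" using F by (auto simp: U_def)
    ultimately have "eventually (\<lambda>g. g \<in> U) (nhds H)" by (rule eventually_nhds_in_open)
    moreover have "eventually (\<lambda>g. g \<notin> U) (filtermap h sequentially)"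
      unfolding eventually_filtermap eventually_sequentially
      using no by (auto simp: U_def dist_real_def abs_minus_commute)
    ultimately have "eventually (\<lambda>g. False) (inf (nhds H) (filtermap h sequentially))"
      using eventually_inf by blast
    then show False using H by (simp only: eventually_False)
  qed
qed

lemma pointwise_clusterD:
  assumes "pointwise_cluster h H" "e > 0"
  shows "\<exists>n\<ge>N. \<bar>h n i - H i\<bar> < e"
  using assms unfolding pointwise_cluster_def by (metis finite.emptyI finite_insert insertI1)

lemma pointwise_cluster_linear_relation:
  assumes c: "pointwise_cluster h H" and e: "\<And>n. h n k = \<alpha> * h n i + \<beta> * h n j"
  shows "H k = \<alpha> * H i + \<beta> * H j"
proof (rule ccontr)
  assume "H k \<noteq> \<alpha> * H i + \<beta> * H j"
  define d where "d = \<bar>H k - (\<alpha> * H i + \<beta> * H j)\<bar>"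
  have d: "d > 0" using \<open>H k \<noteq> _\<close> by (simp add: d_def)
  define \<epsilon> where "\<epsilon> = d / (2 * (1 + \<bar>\<alpha>\<bar> + \<bar>\<beta>\<bar>))"
  have "\<epsilon> > 0" using d by (simp add: \<epsilon>_def add_pos_nonneg)
  then obtain n where n: "\<forall>l\<in>{i, j, k}. \<bar>h n l - H l\<bar> < \<epsilon>"
    using c unfolding pointwise_cluster_def by (meson finite.emptyI finite_insert)
  have "d = \<bar>(H k - h n k) + \<alpha> * (h n i - H i) + \<beta> * (h n j - H j)\<bar>"
    unfolding d_def using e[of n] by (simp add: algebra_simps)
  also have "\<dots> \<le> \<bar>H k - h n k\<bar> + \<bar>\<alpha>\<bar> * \<bar>h n i - H i\<bar> + \<bar>\<beta>\<bar> * \<bar>h n j - H j\<bar>"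
    using abs_triangle_ineq[of "H k - h n k + \<alpha> * (h n i - H i)" "\<beta> * (h n j - H j)"]
      abs_triangle_ineq[of "H k - h n k" "\<alpha> * (h n i - H i)"]
    unfolding abs_mult by linarith
  also have "\<dots> \<le> \<epsilon> + \<bar>\<alpha>\<bar> * \<epsilon> + \<bar>\<beta>\<bar> * \<epsilon>"
    using n by (intro add_mono mult_left_mono) (auto simp: abs_minus_commute)
  also have "\<dots> = \<epsilon> * (1 + \<bar>\<alpha>\<bar> + \<bar>\<beta>\<bar>)" by (simp add: algebra_simps)
  also have "\<dots> = d / 2"
  proof -
    have "1 + \<bar>\<alpha>\<bar> + \<bar>\<beta>\<bar> > 0" by (simp add: add_pos_nonneg)
    then show ?thesis unfolding \<epsilon>_def by (simp add: field_simps)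
  qed
  finally show False using d by simp
qed

lemma pointwise_cluster_tendsto:
  assumes "pointwise_cluster h H" and "(\<lambda>n. h n i) \<longlonglongrightarrow> L"
  shows "H i = L"
proof (rule ccontr)
  assume "H i \<noteq> L"
  then have e: "\<bar>H i - L\<bar> / 2 > 0" by simp
  obtain N where N: "\<forall>n\<ge>N. \<bar>h n i - L\<bar> < \<bar>H i - L\<bar> / 2"
    using LIMSEQ_D[OF assms(2) e] by (auto simp: dist_real_def)
  obtain n where "n \<ge> N" "\<bar>h n i - H i\<bar> < \<bar>H i - L\<bar> / 2"
    using pointwise_clusterD[OF assms(1) e] by blast
  moreover have "\<bar>H i - L\<bar> \<le> \<bar>h n i - H i\<bar> + \<bar>h n i - L\<bar>"
    using abs_triangle_ineq[of "H i - h n i" "h n i - L"] by (simp add: abs_minus_commute)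
  ultimately show False using N by force
qed

lemma pointwise_cluster_bound:
  assumes "pointwise_cluster h H" and "\<And>n. \<bar>h n i\<bar> \<le> B"
  shows "\<bar>H i\<bar> \<le> B"
proof (rule ccontr)
  assume "\<not> \<bar>H i\<bar> \<le> B"
  then obtain n where "\<bar>h n i - H i\<bar> < \<bar>H i\<bar> - B"
    using pointwise_clusterD[OF assms(1), of "\<bar>H i\<bar> - B"] by auto
  then show False using assms(2)[of n] by linarith
qed

lemma norm_one_linear_cluster_exists:
  fixes h :: "nat \<Rightarrow> 'a::real_normed_vector \<Rightarrow> real"
  assumes lin: "\<And>n. linear (h n)" and bound: "\<And>n u. \<bar>h n u\<bar> \<le> norm u"
  shows "\<exists>H. pointwise_cluster h H \<and> bounded_linear H \<and> (\<forall>u. \<bar>H u\<bar> \<le> norm u)"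
proof -
  obtain H where c: "pointwise_cluster h H"
    using pointwise_cluster_exists[of h norm, OF bound] by blast
  have add: "H (u + v) = H u + H v" for u v
  proof -
    have "h n (u + v) = 1 * h n u + 1 * h n v" for n using linear_add[OF lin[of n]] by simp
    then show ?thesis using pointwise_cluster_linear_relation[OF c, of "u + v" 1 u 1 v] by simp
  qed
  have scale: "H (r *\<^sub>R u) = r * H u" for r u
  proof -
    have "h n (r *\<^sub>R u) = r * h n u + 0 * h n u" for n using linear_scale[OF lin[of n]] by simp
    then show ?thesis using pointwise_cluster_linear_relation[OF c, of "r *\<^sub>R u" r u 0 u] by simp
  qed
  have abs: "\<bar>H u\<bar> \<le> norm u" for u using pointwise_cluster_bound[OF c bound] .
  have "bounded_linear H"
    by (rule bounded_linear_intro[where K = 1]) (use add scale abs in auto)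
  with c abs show ?thesis by blast
qed

section \<open>Compact operators on a reflexive space\<close>

lemma blinfun_apply_in_closure_unit_ball:
  fixes T :: "'a::real_normed_vector \<Rightarrow>\<^sub>L 'b::real_normed_vector"
  assumes "norm x \<le> 1"
  shows "T x \<in> closure (blinfun_apply T ` ball 0 1)"
proof -
  have "x \<in> closure (ball 0 1)" using assms by simp
  moreover have "continuous_on UNIV (blinfun_apply T)"
    by (rule linear_continuous_on[OF blinfun.bounded_linear_right])
  ultimately show ?thesis using continuous_image_closure_subset[of UNIV "blinfun_apply T" "ball 0 1"]
    by blast
qed

lemma compact_opsD: "T \<in> compact_ops \<Longrightarrow> compact (closure (blinfun_apply T ` ball 0 1))"
  unfolding compact_ops_def by simp

lemma compact_opsI:
  assumes "blinfun_apply T ` ball 0 1 \<subseteq> K" "compact K"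
  shows "T \<in> compact_ops"
proof -
  have "closure (blinfun_apply T ` ball 0 1) \<subseteq> K"
    using assms by (intro closure_minimal compact_imp_closed)
  then have "K \<inter> closure (blinfun_apply T ` ball 0 1) = closure (blinfun_apply T ` ball 0 1)"
    by blast
  moreover have "compact (K \<inter> closure (blinfun_apply T ` ball 0 1))"
    using assms(2) closed_closure by (rule compact_Int_closed)
  ultimately show ?thesis unfolding compact_ops_def by simp
qed

lemma compact_ops_add:
  assumes "T \<in> compact_ops" "A \<in> compact_ops"
  shows "T + A \<in> compact_ops"
proof (rule compact_opsI)
  let ?K = "{x + y | x y. x \<in> closure (blinfun_apply T ` ball 0 1) \<and> y \<in> closure (blinfun_apply A ` ball 0 1)}"
  show "compact ?K"
    using compact_opsD[OF assms(1)] compact_opsD[OF assms(2)] by (rule compact_sums)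
  show "blinfun_apply (T + A) ` ball 0 1 \<subseteq> ?K"
  proof
    fix y assume "y \<in> blinfun_apply (T + A) ` ball 0 1"
    then obtain u where u: "u \<in> ball 0 1" "y = T u + A u" by (auto simp: blinfun.add_left)
    then have "T u \<in> closure (blinfun_apply T ` ball 0 1)" "A u \<in> closure (blinfun_apply A ` ball 0 1)"
      by (auto intro: closure_subset[THEN subsetD])
    then show "y \<in> ?K" using u(2) by blast
  qed
qed

lemma compact_ops_scaleR:
  assumes "T \<in> compact_ops"
  shows "c *\<^sub>R T \<in> compact_ops"
proof (rule compact_opsI)
  show "compact (scaleR c ` closure (blinfun_apply T ` ball 0 1))"
    using compact_opsD[OF assms] by (rule compact_scaling)
  show "blinfun_apply (c *\<^sub>R T) ` ball 0 1 \<subseteq> scaleR c ` closure (blinfun_apply T ` ball 0 1)"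
  proof
    fix y assume "y \<in> blinfun_apply (c *\<^sub>R T) ` ball 0 1"
    then obtain u where u: "u \<in> ball 0 1" "y = c *\<^sub>R T u" by (auto simp: blinfun.scaleR_left)
    then have "T u \<in> closure (blinfun_apply T ` ball 0 1)" by (auto intro: closure_subset[THEN subsetD])
    then show "y \<in> scaleR c ` closure (blinfun_apply T ` ball 0 1)" using u(2) by blast
  qed
qed

definition rank_one :: "('a::real_normed_vector \<Rightarrow> real) \<Rightarrow> 'b::real_normed_vector \<Rightarrow> 'a \<Rightarrow>\<^sub>L 'b" where
  "rank_one \<phi> w = Blinfun (\<lambda>u. \<phi> u *\<^sub>R w)"

lemma rank_one_apply:
  assumes "bounded_linear \<phi>"
  shows "rank_one \<phi> w u = \<phi> u *\<^sub>R w"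
proof -
  have "bounded_linear (\<lambda>u. \<phi> u *\<^sub>R w)"
    using bounded_linear_scaleR_left assms by (rule bounded_linear_compose)
  then show ?thesis unfolding rank_one_def by (simp add: bounded_linear_Blinfun_apply)
qed

lemma rank_one_compact:
  assumes "bounded_linear \<phi>"
  shows "rank_one \<phi> w \<in> compact_ops"
proof -
  obtain K where K: "\<And>x. norm (\<phi> x) \<le> norm x * K" "K > 0"
    using bounded_linear.pos_bounded[OF assms] by blast
  show ?thesis
  proof (rule compact_opsI)
    show "compact ((\<lambda>r. r *\<^sub>R w) ` {-K..K})"
      by (intro compact_continuous_image continuous_intros) auto
    have "\<bar>\<phi> u\<bar> \<le> K" if "norm u < 1" for u
    proof -
      have "norm u * K \<le> 1 * K" using that K(2) by (intro mult_right_mono) auto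
      then show ?thesis using K(1)[of u] by simp
    qed
    then show "blinfun_apply (rank_one \<phi> w) ` ball 0 1 \<subseteq> (\<lambda>r. r *\<^sub>R w) ` {-K..K}"
      unfolding rank_one_apply[OF assms] by (force intro!: image_eqI simp: abs_le_iff)
  qed
qed

lemma compact_ops_convergent_subseq:
  fixes T A :: "'a::real_normed_vector \<Rightarrow>\<^sub>L 'b::real_normed_vector" and xs :: "nat \<Rightarrow> 'a"
  assumes "T \<in> compact_ops" "A \<in> compact_ops" and "\<And>n. norm (xs n) \<le> 1"
  shows "\<exists>r v w. strict_mono r \<and> (\<lambda>n. T (xs (r n))) \<longlonglongrightarrow> v \<and> (\<lambda>n. A (xs (r n))) \<longlonglongrightarrow> w"
proof -
  let ?K = "closure (blinfun_apply T ` ball 0 1) \<times> closure (blinfun_apply A ` ball 0 1)"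
  have K: "seq_compact ?K"
    using compact_opsD[OF assms(1)] compact_opsD[OF assms(2)]
    by (intro compact_imp_seq_compact compact_Times)
  have "\<forall>n. (T (xs n), A (xs n)) \<in> ?K"
    by (simp add: blinfun_apply_in_closure_unit_ball assms(3))
  then obtain l r where "strict_mono r" "((\<lambda>n. (T (xs n), A (xs n))) \<circ> r) \<longlonglongrightarrow> l"
    using seq_compactE[OF K, of "\<lambda>n. (T (xs n), A (xs n))"] by blast
  then show ?thesis
    by (intro exI[of _ r] exI[of _ "fst l"] exI[of _ "snd l"])
       (auto dest: tendsto_fst tendsto_snd simp: o_def)
qed

text \<open>In a reflexive space, the pointwise cluster point \<open>\<phi> \<mapsto> lim \<phi> (xs n)\<close> on the dual is
  evaluation at some \<open>z\<close>, a weak cluster point of \<open>xs\<close>.\<close>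

lemma reflexive_weak_cluster_point:
  fixes xs :: "nat \<Rightarrow> 'a::real_normed_vector"
  assumes refl: "reflexive_space TYPE('a)" and bound: "\<And>n. norm (xs n) \<le> 1"
  shows "\<exists>z. norm z \<le> 1 \<and>
    (\<forall>(B :: 'a \<Rightarrow>\<^sub>L 'b::real_normed_vector) w. (\<lambda>n. B (xs n)) \<longlonglongrightarrow> w \<longrightarrow> B z = w)"
proof -
  define h where "h n \<phi> = blinfun_apply \<phi> (xs n)" for n and \<phi> :: "'a \<Rightarrow>\<^sub>L real"
  have "\<bar>h n \<phi>\<bar> \<le> norm \<phi>" for n \<phi>
    using norm_blinfun[of \<phi> "xs n"] mult_left_le[OF bound[of n] norm_ge_zero[of \<phi>]]
    by (simp add: h_def)
  moreover have "linear (h n)" for n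
    by (rule linearI) (simp_all add: h_def blinfun.add_left blinfun.scaleR_left)
  ultimately obtain H where c: "pointwise_cluster h H" and H: "bounded_linear H" "\<And>\<phi>. \<bar>H \<phi>\<bar> \<le> norm \<phi>"
    using norm_one_linear_cluster_exists by blast
  obtain z where z: "\<And>\<phi>. blinfun_apply (Blinfun H) \<phi> = \<phi> z"
    using refl unfolding reflexive_space_def by blast
  have Hz: "H \<phi> = \<phi> z" for \<phi> using z[of \<phi>] bounded_linear_Blinfun_apply[OF H(1)] by simp
  have "\<psi> (B z) = \<psi> w" if \<psi>: "bounded_linear \<psi>" and lim: "(\<lambda>n. B (xs n)) \<longlonglongrightarrow> w"
    for \<psi> :: "'b \<Rightarrow> real" and B :: "'a \<Rightarrow>\<^sub>L 'b" and w
  proof -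
    have "bounded_linear (\<lambda>x. \<psi> (B x))"
      by (rule bounded_linear_compose[OF \<psi> blinfun.bounded_linear_right])
    then have ap: "blinfun_apply (Blinfun (\<lambda>x. \<psi> (B x))) = (\<lambda>x. \<psi> (B x))"
      by (rule bounded_linear_Blinfun_apply)
    have "(\<lambda>n. h n (Blinfun (\<lambda>x. \<psi> (B x)))) \<longlonglongrightarrow> \<psi> w"
      unfolding h_def ap using bounded_linear.tendsto[OF \<psi> lim] .
    then show ?thesis
      using pointwise_cluster_tendsto[OF c] Hz ap by metis
  qed
  then have "\<forall>(B :: 'a \<Rightarrow>\<^sub>L 'b) w. (\<lambda>n. B (xs n)) \<longlonglongrightarrow> w \<longrightarrow> B z = w"
    using bounded_linear_functionals_separate by blast
  moreover have "norm z \<le> 1"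
  proof -
    obtain f where f: "supporting_functional z f" using supporting_functional_exists by blast
    have ap: "blinfun_apply (Blinfun f) = f"
      using bounded_linear_Blinfun_apply[OF supporting_functionalD(1)[OF f]] .
    have "norm (Blinfun f) \<le> 1"
      by (rule norm_blinfun_bound) (use supporting_functionalD(2)[OF f] in \<open>simp_all add: ap\<close>)
    then show ?thesis
      using H(2)[of "Blinfun f"] Hz[of "Blinfun f"] supporting_functionalD(3)[OF f] by (simp add: ap)
  qed
  ultimately show ?thesis by blast
qed

lemma norm_eq_norm_blinfun_imp_unit:
  fixes T :: "'a::real_normed_vector \<Rightarrow>\<^sub>L 'b::real_normed_vector"
  assumes "norm z \<le> 1" "norm (T z) = norm T" "T \<noteq> 0"
  shows "norm z = 1"
proof (rule ccontr)
  assume "norm z \<noteq> 1"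
  then have "norm z < 1" using assms(1) by simp
  moreover have "z \<noteq> 0" using assms(2,3) by auto
  ultimately have "norm T * norm z < norm T" using assms(3) by simp
  then show False using norm_blinfun[of T z] assms(2) by simp
qed

lemma norming_seq_subseq_attains:
  fixes T A :: "'a::real_normed_vector \<Rightarrow>\<^sub>L 'b::real_normed_vector"
  assumes refl: "reflexive_space TYPE('a)" and T: "T \<in> compact_ops" "T \<noteq> 0"
    and A: "A \<in> compact_ops" and xs: "norming_seq T xs"
  shows "\<exists>r z. strict_mono r \<and> z \<in> norm_attain_set T
    \<and> (\<lambda>n. T (xs (r n))) \<longlonglongrightarrow> T z \<and> (\<lambda>n. A (xs (r n))) \<longlonglongrightarrow> A z"
proof -
  have unit: "\<And>n. norm (xs n) = 1" and lim: "(\<lambda>n. norm (T (xs n))) \<longlonglongrightarrow> norm T"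
    using xs unfolding norming_seq_def by blast+
  obtain r v w where r: "strict_mono r" and v: "(\<lambda>n. T (xs (r n))) \<longlonglongrightarrow> v"
    and w: "(\<lambda>n. A (xs (r n))) \<longlonglongrightarrow> w"
    using compact_ops_convergent_subseq[OF T(1) A, of xs] unit by auto
  obtain z where z: "norm z \<le> 1" "T z = v" "A z = w"
    using reflexive_weak_cluster_point[OF refl, of "xs \<circ> r"] unit v w by (auto simp: o_def)
  have "(\<lambda>n. norm (T (xs (r n)))) \<longlonglongrightarrow> norm T"
    using LIMSEQ_subseq_LIMSEQ[OF lim r] by (simp add: o_def)
  then have "norm (T z) = norm T"
    using tendsto_norm[OF v] z(2) LIMSEQ_unique by blast
  then have "z \<in> norm_attain_set T"
    using norm_eq_norm_blinfun_imp_unit[OF z(1) _ T(2)] by (simp add: norm_attain_set_def)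
  then show ?thesis using r v w z by blast
qed

lemma exists_unit_near_norm:
  fixes B :: "'a::real_normed_vector \<Rightarrow>\<^sub>L 'b::real_normed_vector"
  assumes "norm (e :: 'a) = 1" and "\<epsilon> > 0"
  shows "\<exists>x. norm x = 1 \<and> norm B - \<epsilon> < norm (B x)"
proof (rule ccontr)
  assume "\<not> ?thesis"
  then have unit: "norm (B x) \<le> norm B - \<epsilon>" if "norm x = 1" for x using that by force
  have "norm (B x) \<le> (norm B - \<epsilon>) * norm x" for x
  proof (cases "x = 0")
    case False
    then have "norm (B (sgn x)) \<le> norm B - \<epsilon>" by (intro unit) (simp add: norm_sgn)
    then show ?thesis using False by (simp add: sgn_div_norm blinfun.scaleR_right field_simps)
  qed simp
  moreover have "0 \<le> norm B - \<epsilon>" using unit[OF assms(1)] norm_ge_zero order_trans by blast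
  ultimately have "norm B \<le> norm B - \<epsilon>" by (intro norm_blinfun_bound)
  then show False using assms(2) by simp
qed

lemma norming_seqI:
  fixes T :: "'a::real_normed_vector \<Rightarrow>\<^sub>L 'b::real_normed_vector"
  assumes unit: "\<And>n. norm (xs n) = 1" and lower: "\<And>n. norm T - \<epsilon> n \<le> norm (T (xs n))"
    and \<epsilon>: "\<epsilon> \<longlonglongrightarrow> 0"
  shows "norming_seq T xs"
proof -
  have "(\<lambda>n. norm (T (xs n))) \<longlonglongrightarrow> norm T"
  proof (rule tendsto_sandwich[of "\<lambda>n. norm T - \<epsilon> n" _ _ "\<lambda>n. norm T"])
    show "\<forall>\<^sub>F n in sequentially. norm T - \<epsilon> n \<le> norm (T (xs n))" using lower by simp
    have "norm (T (xs n)) \<le> norm T" for n using norm_blinfun[of T "xs n"] unit by simp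
    then show "\<forall>\<^sub>F n in sequentially. norm (T (xs n)) \<le> norm T" by simp
    show "(\<lambda>n. norm T - \<epsilon> n) \<longlonglongrightarrow> norm T" using tendsto_diff[OF tendsto_const \<epsilon>] by simp
  qed simp
  then show ?thesis using unit unfolding norming_seq_def by blast
qed

lemma norming_seq_exists:
  fixes T :: "'a::real_normed_vector \<Rightarrow>\<^sub>L 'b::real_normed_vector"
  assumes "T \<noteq> 0"
  shows "\<exists>xs. norming_seq T xs"
proof -
  obtain x where "T x \<noteq> 0" using assms by (metis blinfun_eqI zero_blinfun.rep_eq)
  then have e: "norm (sgn x) = 1" by (auto simp: norm_sgn)
  have "\<forall>n. \<exists>x. norm x = 1 \<and> norm T - inverse (real (Suc n)) < norm (T x)"
  proof
    fix n
    show "\<exists>x. norm x = 1 \<and> norm T - inverse (real (Suc n)) < norm (T x)"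
      by (rule exists_unit_near_norm[OF e]) simp
  qed
  then obtain xs where "\<And>n. norm (xs n) = 1" "\<And>n. norm T - inverse (real (Suc n)) < norm (T (xs n))"
    by metis
  then have "norming_seq T xs"
    by (intro norming_seqI[OF _ less_imp_le LIMSEQ_inverse_real_of_nat])
  then show ?thesis by blast
qed

lemma norm_attain_set_nonempty:
  fixes T :: "'a::real_normed_vector \<Rightarrow>\<^sub>L 'b::real_normed_vector"
  assumes "reflexive_space TYPE('a)" "T \<in> compact_ops" "T \<noteq> 0"
  shows "\<exists>x. x \<in> norm_attain_set T"
  using norming_seq_exists[OF assms(3)] norming_seq_subseq_attains[OF assms assms(2)] by blast

text \<open>Support functionals depend weak* continuously on the point at a smooth point: a
  pointwise cluster point of the supporting functionals supports the limit, hence is \<open>f0\<close>.\<close>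

lemma supporting_functional_limit_at_smooth_point:
  assumes smooth: "smooth_point_in UNIV y0" and f0: "supporting_functional y0 f0"
    and g: "\<And>n. supporting_functional (ys n) (g n)"
    and ys: "ys \<longlonglongrightarrow> y0" and ws: "ws \<longlonglongrightarrow> w" and lim: "(\<lambda>n. g n (ws n)) \<longlonglongrightarrow> c"
  shows "c = f0 w"
proof -
  note lin = supporting_functional_linear[OF g]
  obtain H where cl: "pointwise_cluster g H" and H: "bounded_linear H" "\<And>u. \<bar>H u\<bar> \<le> norm u"
    using norm_one_linear_cluster_exists[of g] supporting_functionalD(2)[OF g]
      bounded_linear.linear[OF supporting_functionalD(1)[OF g]] by blast
  have near: "(\<lambda>n. g n p - g n (qs n)) \<longlonglongrightarrow> 0" if "qs \<longlonglongrightarrow> p" for qs p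
  proof (rule Lim_null_comparison)
    show "\<forall>\<^sub>F n in sequentially. norm (g n p - g n (qs n)) \<le> norm (p - qs n)"
      using supporting_functionalD(2)[OF g] lin(4) by (simp add: lin(4)[symmetric])
    show "(\<lambda>n. norm (p - qs n)) \<longlonglongrightarrow> 0"
      using tendsto_norm[OF tendsto_diff[OF tendsto_const[of p] that]] by simp
  qed
  have "(\<lambda>n. (g n y0 - g n (ys n)) + norm (ys n)) \<longlonglongrightarrow> 0 + norm y0"
    by (intro tendsto_add near ys tendsto_norm)
  then have "H y0 = norm y0"
    using pointwise_cluster_tendsto[OF cl] supporting_functionalD(3)[OF g] by simp
  then have "supporting_functional y0 H" using H unfolding supporting_functional_def by blast
  then have "H = f0" using smooth f0 by (simp add: smooth_point_in_UNIV_iff)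
  moreover have "(\<lambda>n. (g n w - g n (ws n)) + g n (ws n)) \<longlonglongrightarrow> 0 + c"
    by (intro tendsto_add near ws lim)
  then have "H w = c" using pointwise_cluster_tendsto[OF cl] by simp
  ultimately show ?thesis by simp
qed

lemma birkhoff_orth_of_support_value:
  fixes T A :: "'a::real_normed_vector \<Rightarrow>\<^sub>L 'b::real_normed_vector"
  assumes x: "x \<in> norm_attain_set T" and f: "supporting_functional (T x) f" and "f (A x) = 0"
  shows "birkhoff_orth T A"
  unfolding birkhoff_orth_def
proof
  fix t :: real
  have "norm T = f ((T + t *\<^sub>R A) x)"
    using x assms(3) supporting_functional_linear(1,2)[OF f] supporting_functionalD(3)[OF f]
    by (simp add: norm_attain_set_def blinfun.add_left blinfun.scaleR_left)
  also have "\<dots> \<le> norm ((T + t *\<^sub>R A) x)" using supporting_functionalD(2)[OF f] abs_le_D1 by blast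
  also have "\<dots> \<le> norm (T + t *\<^sub>R A)"
    using norm_blinfun[of "T + t *\<^sub>R A" x] x by (simp add: norm_attain_set_def)
  finally show "norm T \<le> norm (T + t *\<^sub>R A)" .
qed

lemma norm_attain_set_eq_pairI:
  fixes T :: "'a::real_normed_vector \<Rightarrow>\<^sub>L 'b::real_normed_vector"
  assumes x1: "x1 \<in> norm_attain_set T"
    and no_sep: "\<And>x2 \<phi>. x2 \<in> norm_attain_set T \<Longrightarrow> bounded_linear \<phi> \<Longrightarrow> \<phi> x1 = 0 \<Longrightarrow> \<phi> x2 = (1::real) \<Longrightarrow> False"
  shows "norm_attain_set T = {x1, - x1}"
proof
  show "norm_attain_set T \<subseteq> {x1, - x1}"
  proof
    fix x2 assume x2: "x2 \<in> norm_attain_set T"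
    show "x2 \<in> {x1, - x1}"
    proof (rule ccontr)
      assume "x2 \<notin> {x1, - x1}"
      moreover have "norm x1 = 1" "norm x2 = 1" using x1 x2 by (simp_all add: norm_attain_set_def)
      ultimately obtain \<phi> :: "'a \<Rightarrow> real" where "bounded_linear \<phi>" "\<phi> x1 = 0" "\<phi> x2 = 1"
        using separating_functional by blast
      then show False by (rule no_sep[OF x2])
    qed
  qed
  show "{x1, - x1} \<subseteq> norm_attain_set T"
    using x1 by (simp add: norm_attain_set_def blinfun.minus_right)
qed

lemma supporting_functional_on_of_attain:
  fixes T :: "'a::real_normed_vector \<Rightarrow>\<^sub>L 'b::real_normed_vector"
  assumes x: "x \<in> norm_attain_set T" and f: "supporting_functional (T x) f"
  shows "supporting_functional_on S T (\<lambda>A. f (A x))"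
  unfolding supporting_functional_on_def
proof (intro conjI ballI allI)
  show "f ((u + v) x) = f (u x) + f (v x)" for u v :: "'a \<Rightarrow>\<^sub>L 'b"
    using supporting_functional_linear(1)[OF f] by (simp add: blinfun.add_left)
  show "f ((c *\<^sub>R u) x) = c * f (u x)" for c and u :: "'a \<Rightarrow>\<^sub>L 'b"
    using supporting_functional_linear(2)[OF f] by (simp add: blinfun.scaleR_left)
  show "\<bar>f (u x)\<bar> \<le> norm u" for u :: "'a \<Rightarrow>\<^sub>L 'b"
    using supporting_functionalD(2)[OF f, of "u x"] norm_blinfun[of u x] x
    by (simp add: norm_attain_set_def)
  show "f (T x) = norm T" using supporting_functionalD(3)[OF f] x by (simp add: norm_attain_set_def)
qed

lemma smooth_point_in_compact_ops_iff:
  fixes T :: "'a::real_normed_vector \<Rightarrow>\<^sub>L 'b::real_normed_vector"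
  assumes "T \<in> compact_ops" "T \<noteq> 0"
  shows "smooth_point_in compact_ops T \<longleftrightarrow> (\<exists>F. supporting_functional_on compact_ops T F) \<and>
    (\<forall>F G. supporting_functional_on compact_ops T F \<longrightarrow> supporting_functional_on compact_ops T G
       \<longrightarrow> (\<forall>A\<in>compact_ops. F A = G A))"
  using support_functional_on_iff[OF compact_ops_scaleR assms] assms
  unfolding smooth_point_in_def by blast

text \<open>Near-maximisers of \<open>T + t\<^sub>n A\<close>, \<open>t\<^sub>n = 1/(n+1)\<close>, form a norming sequence for \<open>T\<close>, and
  support functionals at their values detect the growth rate \<open>c\<close> of the norm in direction \<open>A\<close>.\<close>

lemma norm_growth_norming_seq:
  fixes T A :: "'a::real_normed_vector \<Rightarrow>\<^sub>L 'b::real_normed_vector"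
  assumes e: "norm (e :: 'a) = 1" and grow: "\<And>t. t > 0 \<Longrightarrow> norm T + t * c \<le> norm (T + t *\<^sub>R A)"
  shows "\<exists>xs g. norming_seq T xs
    \<and> (\<forall>n. supporting_functional (T (xs n) + inverse (real (Suc n)) *\<^sub>R A (xs n)) (g n))
    \<and> (\<forall>n. c - inverse (real (Suc n)) < g n (A (xs n)))"
proof -
  define t where "t n = inverse (real (Suc n))" for n
  have t: "t n > 0" "t n \<le> 1" for n by (simp_all add: t_def inverse_le_1_iff)
  have "\<forall>n. \<exists>x. norm x = 1 \<and> norm (T + t n *\<^sub>R A) - (t n)\<^sup>2 < norm ((T + t n *\<^sub>R A) x)"
  proof
    fix n
    show "\<exists>x. norm x = 1 \<and> norm (T + t n *\<^sub>R A) - (t n)\<^sup>2 < norm ((T + t n *\<^sub>R A) x)"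
      by (rule exists_unit_near_norm[OF e]) (use t(1)[of n] in simp)
  qed
  then obtain xs where xs: "\<And>n. norm (xs n) = 1"
    and near: "\<And>n. norm (T + t n *\<^sub>R A) - (t n)\<^sup>2 < norm (T (xs n) + t n *\<^sub>R A (xs n))"
    by (metis blinfun.add_left blinfun.scaleR_left)
  have "\<forall>n. \<exists>f. supporting_functional (T (xs n) + t n *\<^sub>R A (xs n)) f"
    using supporting_functional_exists by blast
  then obtain g where g: "\<And>n. supporting_functional (T (xs n) + t n *\<^sub>R A (xs n)) (g n)"
    by metis
  have TA: "norm (T (xs n)) \<le> norm T" "norm (A (xs n)) \<le> norm A" for n
    using norm_blinfun[of T "xs n"] norm_blinfun[of A "xs n"] xs by simp_all
  have lower: "norm T + t n * c - (t n)\<^sup>2 < norm (T (xs n) + t n *\<^sub>R A (xs n))" for n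
    using near[of n] grow[OF t(1)[of n]] by linarith
  have "c - t n < g n (A (xs n))" for n
  proof -
    have "norm (T (xs n) + t n *\<^sub>R A (xs n)) = g n (T (xs n)) + t n * g n (A (xs n))"
      using supporting_functionalD(3)[OF g] supporting_functional_linear(1,2)[OF g] by simp
    also have "g n (T (xs n)) \<le> norm T"
      using supporting_functionalD(2)[OF g, of n "T (xs n)"] TA(1)[of n] by simp
    finally have "t n * c < t n * (g n (A (xs n)) + t n)"
      using lower[of n] by (simp add: algebra_simps power2_eq_square)
    then show ?thesis using t(1)[of n] by (simp add: mult_less_cancel_left_pos)
  qed
  moreover have "norming_seq T xs"
  proof (rule norming_seqI[OF xs])
    show "norm T - t n * (\<bar>c\<bar> + 1 + norm A) \<le> norm (T (xs n))" for n
    proof -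
      have "norm (t n *\<^sub>R A (xs n)) \<le> t n * norm A" "(t n)\<^sup>2 \<le> t n" "- (t n * \<bar>c\<bar>) \<le> t n * c"
        using TA(2)[of n] t[of n] by (auto simp: power2_eq_square mult_left_mono abs_if)
      then show ?thesis
        using lower[of n] norm_triangle_ineq[of "T (xs n)" "t n *\<^sub>R A (xs n)"]
        by (simp add: algebra_simps)
    qed
    show "(\<lambda>n. t n * (\<bar>c\<bar> + 1 + norm A)) \<longlonglongrightarrow> 0"
      unfolding t_def by (intro tendsto_mult_left_zero LIMSEQ_inverse_real_of_nat)
  qed
  ultimately show ?thesis using g unfolding t_def by blast
qed

lemma constant_norming_seq: "x \<in> norm_attain_set T \<Longrightarrow> norming_seq T (\<lambda>n. x)"
  unfolding norming_seq_def norm_attain_set_def by simp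

lemma subseq_limit_const: "subseq_limit (\<lambda>n. c) c"
  unfolding subseq_limit_def by (intro exI[of _ id]) (simp add: strict_mono_def o_def)

section \<open>A compact operator attaining its norm only at \<open>\<plusminus>x0\<close>, with \<open>T x0\<close> smooth\<close>

locale smooth_norm_attainment =
  fixes T :: "'a::real_normed_vector \<Rightarrow>\<^sub>L 'b::real_normed_vector" and x0 :: 'a and f0 :: "'b \<Rightarrow> real"
  assumes reflexive: "reflexive_space TYPE('a)"
    and compact: "T \<in> compact_ops" and nonzero: "T \<noteq> 0"
    and attain_set: "norm_attain_set T = {x0, - x0}"
    and smooth: "smooth_point_in UNIV (T x0)"
    and support: "supporting_functional (T x0) f0"
begin

lemma x0_attains: "x0 \<in> norm_attain_set T"
  using attain_set by simp

text \<open>Along any norming sequence, functionals supporting points close to \<open>T xs\<^sub>n\<close> evaluate \<open>A xs\<^sub>n\<close>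
  to values converging to \<open>f0 (A x0)\<close>: a subsequence of \<open>xs\<close> converges weakly to \<open>\<sigma> x0\<close> with
  \<open>\<sigma> = \<plusminus>1\<close>, and the sign cancels.\<close>

lemma support_values_along_norming_seq:
  assumes A: "A \<in> compact_ops" and xs: "norming_seq T xs"
    and g: "\<And>n. supporting_functional (Y n) (g n)" and Y: "(\<lambda>n. Y n - T (xs n)) \<longlonglongrightarrow> 0"
    and lim: "(\<lambda>n. g n (A (xs n))) \<longlonglongrightarrow> d"
  shows "d = f0 (A x0)"
proof -
  obtain r z where r: "strict_mono r" and z: "z \<in> norm_attain_set T"
    and Tz: "(\<lambda>n. T (xs (r n))) \<longlonglongrightarrow> T z" and Az: "(\<lambda>n. A (xs (r n))) \<longlonglongrightarrow> A z"
    using norming_seq_subseq_attains[OF reflexive compact nonzero A xs] by blast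
  obtain \<sigma> :: real where \<sigma>: "\<sigma> = 1 \<or> \<sigma> = -1" and z_eq: "z = \<sigma> *\<^sub>R x0"
    using z attain_set by (metis insert_iff singletonD scaleR_one scaleR_minus1_left)
  have sgn\<sigma>: "sgn \<sigma> = \<sigma>" "\<sigma> \<noteq> 0" "\<sigma> * \<sigma> = 1" using \<sigma> by auto
  have "supporting_functional (\<sigma> *\<^sub>R Y (r n)) (\<lambda>u. \<sigma> * g (r n) u)" for n
    using supporting_functional_scaleR[OF g sgn\<sigma>(2)] sgn\<sigma>(1) by simp
  moreover have "(\<lambda>n. \<sigma> *\<^sub>R Y (r n)) \<longlonglongrightarrow> \<sigma> *\<^sub>R (0 + T z)"
    using LIMSEQ_subseq_LIMSEQ[OF Y r] Tz
    by (intro tendsto_scaleR tendsto_const) (auto dest: tendsto_add simp: o_def)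
  then have "(\<lambda>n. \<sigma> *\<^sub>R Y (r n)) \<longlonglongrightarrow> T x0"
    using sgn\<sigma>(3) by (simp add: z_eq blinfun.scaleR_right)
  moreover have "(\<lambda>n. \<sigma> * g (r n) (A (xs (r n)))) \<longlonglongrightarrow> \<sigma> * d"
    using LIMSEQ_subseq_LIMSEQ[OF lim r] by (intro tendsto_mult tendsto_const) (simp add: o_def)
  ultimately have "\<sigma> * d = f0 (A z)"
    by (rule supporting_functional_limit_at_smooth_point[OF smooth support _ _ Az])
  also have "\<dots> = \<sigma> * f0 (A x0)"
    using supporting_functional_linear(2)[OF support] by (simp add: z_eq blinfun.scaleR_right)
  finally show ?thesis using sgn\<sigma>(2) by simp
qed

lemma norm_growth_le_support_value:
  assumes A: "A \<in> compact_ops" and grow: "\<And>t. t > 0 \<Longrightarrow> norm T + t * c \<le> norm (T + t *\<^sub>R A)"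
  shows "c \<le> f0 (A x0)"
proof -
  have "norm x0 = 1" using x0_attains by (simp add: norm_attain_set_def)
  then obtain xs g where xs: "norming_seq T xs"
    and g: "\<And>n. supporting_functional (T (xs n) + inverse (real (Suc n)) *\<^sub>R A (xs n)) (g n)"
    and above: "\<And>n. c - inverse (real (Suc n)) < g n (A (xs n))"
    using norm_growth_norming_seq[OF _ grow] by blast
  have unit: "norm (xs n) = 1" for n using xs by (simp add: norming_seq_def)
  have Axs: "norm (A (xs n)) \<le> norm A" for n using norm_blinfun[of A "xs n"] unit[of n] by simp
  have "\<bar>g n (A (xs n))\<bar> \<le> norm A" for n
    using supporting_functionalD(2)[OF g, of n "A (xs n)"] Axs[of n] by simp
  then have "bounded (range (\<lambda>n. g n (A (xs n))))"
    by (intro boundedI[of _ "norm A"]) auto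
  then obtain d r where r: "strict_mono r" and d: "((\<lambda>n. g n (A (xs n))) \<circ> r) \<longlonglongrightarrow> d"
    using bounded_imp_convergent_subsequence by blast
  have inv: "(\<lambda>n. inverse (real (Suc (r n)))) \<longlonglongrightarrow> 0"
    using LIMSEQ_subseq_LIMSEQ[OF LIMSEQ_inverse_real_of_nat r] by (simp add: o_def)
  have "c \<le> d + 0"
  proof (rule LIMSEQ_le_const)
    show "(\<lambda>n. g (r n) (A (xs (r n))) + inverse (real (Suc (r n)))) \<longlonglongrightarrow> d + 0"
      using d inv by (intro tendsto_add) (simp_all add: o_def)
    show "\<exists>N. \<forall>n\<ge>N. c \<le> g (r n) (A (xs (r n))) + inverse (real (Suc (r n)))"
      using above less_imp_le by (auto simp: algebra_simps)
  qed
  moreover have "d = f0 (A x0)"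
  proof (rule support_values_along_norming_seq[OF A])
    show "norming_seq T (xs \<circ> r)"
      using xs LIMSEQ_subseq_LIMSEQ[OF _ r] unfolding norming_seq_def by (auto simp: o_def)
    show "supporting_functional (T ((xs \<circ> r) n) + inverse (real (Suc (r n))) *\<^sub>R A ((xs \<circ> r) n)) (g (r n))"
      for n using g[of "r n"] by simp
    show "(\<lambda>n. (T ((xs \<circ> r) n) + inverse (real (Suc (r n))) *\<^sub>R A ((xs \<circ> r) n)) - T ((xs \<circ> r) n))
      \<longlonglongrightarrow> 0"
    proof (rule Lim_null_comparison)
      show "\<forall>\<^sub>F n in sequentially. norm (T ((xs \<circ> r) n) + inverse (real (Suc (r n))) *\<^sub>R A ((xs \<circ> r) n)
          - T ((xs \<circ> r) n)) \<le> inverse (real (Suc (r n))) * norm A"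
        using Axs by (simp add: mult_left_mono)
      show "(\<lambda>n. inverse (real (Suc (r n))) * norm A) \<longlonglongrightarrow> 0"
        using tendsto_mult_left_zero[OF inv] .
    qed
    show "(\<lambda>n. g (r n) (A ((xs \<circ> r) n))) \<longlonglongrightarrow> d" using d by (simp add: o_def)
  qed
  ultimately show ?thesis by simp
qed

lemma support_value_of_norm_growth:
  assumes A: "A \<in> compact_ops" and grow: "\<And>t. norm T + t * c \<le> norm (T + t *\<^sub>R A)"
  shows "c = f0 (A x0)"
proof (rule antisym)
  show "c \<le> f0 (A x0)" using norm_growth_le_support_value[OF A grow] .
  have "- c \<le> f0 ((- A) x0)"
  proof (rule norm_growth_le_support_value)
    show "- A \<in> compact_ops" using compact_ops_scaleR[OF A, of "-1"] by simp
    show "norm T + t * - c \<le> norm (T + t *\<^sub>R - A)" for t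
      using grow[of "- t"] by simp
  qed
  then show "f0 (A x0) \<le> c"
    using supporting_functional_linear(3)[OF support] by (simp add: blinfun.minus_left)
qed

lemma smooth_point_in_compact_ops: "smooth_point_in compact_ops T"
proof -
  have F0: "supporting_functional_on compact_ops T (\<lambda>A. f0 (A x0))"
    by (rule supporting_functional_on_of_attain[OF x0_attains support])
  have unique: "F A = f0 (A x0)" if F: "supporting_functional_on compact_ops T F" and A: "A \<in> compact_ops"
    for F A
  proof (rule support_value_of_norm_growth[OF A])
    fix t :: real
    have tA: "t *\<^sub>R A \<in> compact_ops" by (rule compact_ops_scaleR[OF A])
    have "norm T + t * F A = F (T + t *\<^sub>R A)"
      using F compact tA A unfolding supporting_functional_on_def by simp
    also have "\<dots> \<le> norm (T + t *\<^sub>R A)"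
      using F compact_ops_add[OF compact tA] unfolding supporting_functional_on_def by fastforce
    finally show "norm T + t * F A \<le> norm (T + t *\<^sub>R A)" .
  qed
  show ?thesis
    unfolding smooth_point_in_compact_ops_iff[OF compact nonzero]
  proof (intro conjI allI impI ballI)
    show "\<exists>F. supporting_functional_on compact_ops T F" using F0 by blast
    show "F A = G A" if "supporting_functional_on compact_ops T F" "supporting_functional_on compact_ops T G"
      and "A \<in> compact_ops" for F G A
      using unique[OF that(1,3)] unique[OF that(2,3)] by simp
  qed
qed

lemma sip_subseq_limit_eq:
  assumes A: "A \<in> compact_ops" and s: "compatible_sip s" and xs: "norming_seq T xs"
    and "subseq_limit (\<lambda>n. s (A (xs n)) (T (xs n))) l"
  shows "l = norm T * f0 (A x0)"
proof -
  obtain r where r: "strict_mono r" and lim: "(\<lambda>n. s (A (xs (r n))) (T (xs (r n)))) \<longlonglongrightarrow> l"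
    using assms(4) unfolding subseq_limit_def by (auto simp: o_def)
  have xr: "norming_seq T (xs \<circ> r)"
    using xs LIMSEQ_subseq_LIMSEQ[OF _ r] unfolding norming_seq_def by (auto simp: o_def)
  then have "(\<lambda>n. norm (T (xs (r n)))) \<longlonglongrightarrow> norm T" by (simp add: norming_seq_def)
  then have "(\<lambda>n. s (A (xs (r n))) (T (xs (r n))) / norm (T (xs (r n)))) \<longlonglongrightarrow> l / norm T"
    using lim nonzero by (intro tendsto_divide) simp_all
  then have "l / norm T = f0 (A x0)"
    using support_values_along_norming_seq[OF A xr compatible_sip_supporting_functional[OF s],
        where Y = "\<lambda>n. T (xs (r n))"]
    by (simp add: o_def)
  then show ?thesis using nonzero by (simp add: field_simps)
qed

lemma birkhoff_orth_iff_sip_limits: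
  assumes A: "A \<in> compact_ops"
  shows "birkhoff_orth T A \<longleftrightarrow>
    (\<forall>s xs l. compatible_sip s \<longrightarrow> norming_seq T xs \<longrightarrow>
       subseq_limit (\<lambda>n. s (A (xs n)) (T (xs n))) l \<longrightarrow> l = 0)"
proof -
  have "birkhoff_orth T A \<longleftrightarrow> f0 (A x0) = 0"
  proof
    assume "birkhoff_orth T A"
    then have "0 = f0 (A x0)"
      by (intro support_value_of_norm_growth[OF A]) (simp add: birkhoff_orth_def)
    then show "f0 (A x0) = 0" ..
  qed (rule birkhoff_orth_of_support_value[OF x0_attains support])
  moreover have "(\<forall>s xs l. compatible_sip s \<longrightarrow> norming_seq T xs \<longrightarrow>
       subseq_limit (\<lambda>n. s (A (xs n)) (T (xs n))) l \<longrightarrow> l = 0) \<longleftrightarrow> f0 (A x0) = 0"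
  proof
    assume limits: "\<forall>s xs l. compatible_sip s \<longrightarrow> norming_seq T xs \<longrightarrow>
       subseq_limit (\<lambda>n. s (A (xs n)) (T (xs n))) l \<longrightarrow> l = 0"
    have Tx0: "T x0 \<noteq> 0" using smooth by (simp add: smooth_point_in_UNIV_iff)
    obtain s where s: "compatible_sip s" "\<And>u. s u (T x0) = norm (T x0) * f0 u"
      using compatible_sip_exists[OF Tx0 support] by blast
    have "s (A x0) (T x0) = 0"
      using limits s(1) constant_norming_seq[OF x0_attains] subseq_limit_const[of "s (A x0) (T x0)"]
      by blast
    then show "f0 (A x0) = 0" using s(2) Tx0 by simp
  qed (use sip_subseq_limit_eq[OF A] in simp)
  ultimately show ?thesis by simp
qed

end

text \<open>Both converse directions test \<open>T\<close> against rank-one operators \<open>\<phi> \<otimes> w\<close>: with \<open>\<phi>\<close>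
  separating two norming points they force \<open>M\<^sub>T = {\<plusminus>x1}\<close>, and with \<open>\<phi>\<close> supporting \<open>x1\<close> they
  force any two support functionals at \<open>T x1\<close> to agree.\<close>

lemma smooth_compact_ops_imp_attain_pair:
  fixes T :: "'a::real_normed_vector \<Rightarrow>\<^sub>L 'b::real_normed_vector"
  assumes refl: "reflexive_space TYPE('a)" and T: "T \<in> compact_ops" "T \<noteq> 0"
    and smooth: "smooth_point_in compact_ops T"
  shows "\<exists>x0. norm x0 = 1 \<and> norm_attain_set T = {x0, - x0} \<and> smooth_point_in UNIV (T x0)"
proof -
  have eq: "f (A x) = f' (A x')"
    if "x \<in> norm_attain_set T" "x' \<in> norm_attain_set T" "supporting_functional (T x) f"
      "supporting_functional (T x') f'" "A \<in> compact_ops" for x x' f f' A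
    using smooth supporting_functional_on_of_attain[OF that(1,3)]
      supporting_functional_on_of_attain[OF that(2,4)] that(5)
    unfolding smooth_point_in_compact_ops_iff[OF T] by blast
  obtain x1 where x1: "x1 \<in> norm_attain_set T" using norm_attain_set_nonempty[OF refl T] by blast
  then have unit: "norm x1 = 1" "norm (T x1) = norm T" by (simp_all add: norm_attain_set_def)
  obtain f1 where f1: "supporting_functional (T x1) f1" using supporting_functional_exists by blast
  have "norm_attain_set T = {x1, - x1}"
  proof (rule norm_attain_set_eq_pairI[OF x1])
    fix x2 and \<phi> :: "'a \<Rightarrow> real"
    assume x2: "x2 \<in> norm_attain_set T" and \<phi>: "bounded_linear \<phi>" "\<phi> x1 = 0" "\<phi> x2 = 1"
    obtain f2 where f2: "supporting_functional (T x2) f2" using supporting_functional_exists by blast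
    have "f1 (rank_one \<phi> (T x2) x1) = f2 (rank_one \<phi> (T x2) x2)"
      by (rule eq[OF x1 x2 f1 f2 rank_one_compact[OF \<phi>(1)]])
    then have "norm T = 0"
      using \<phi> x2 supporting_functional_linear(5)[OF f1] supporting_functionalD(3)[OF f2]
      by (simp add: rank_one_apply norm_attain_set_def)
    then show False using T(2) by simp
  qed
  moreover have "smooth_point_in UNIV (T x1)"
    unfolding smooth_point_in_UNIV_iff
  proof (intro conjI allI impI ext)
    show "T x1 \<noteq> 0" using unit T(2) by auto
    fix f g u assume f: "supporting_functional (T x1) f" and g: "supporting_functional (T x1) g"
    obtain \<phi> where \<phi>: "supporting_functional x1 \<phi>" using supporting_functional_exists by blast
    note \<phi>_bl = supporting_functionalD(1)[OF \<phi>]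
    have "f (rank_one \<phi> u x1) = g (rank_one \<phi> u x1)"
      by (rule eq[OF x1 x1 f g rank_one_compact[OF \<phi>_bl]])
    then show "f u = g u"
      using supporting_functionalD(3)[OF \<phi>] unit by (simp add: rank_one_apply[OF \<phi>_bl])
  qed
  ultimately show ?thesis using unit by blast
qed

lemma smooth_point_of_sip_orthogonality:
  fixes T :: "'a::real_normed_vector \<Rightarrow>\<^sub>L 'b::real_normed_vector"
  assumes x1: "x1 \<in> norm_attain_set T" and T: "T \<noteq> 0"
    and zero: "\<And>A s. A \<in> compact_ops \<Longrightarrow> birkhoff_orth T A \<Longrightarrow> compatible_sip s \<Longrightarrow> s (A x1) (T x1) = 0"
  shows "smooth_point_in UNIV (T x1)"
  unfolding smooth_point_in_UNIV_iff
proof (intro conjI allI impI ext)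
  have unit: "norm x1 = 1" "norm (T x1) = norm T" using x1 by (simp_all add: norm_attain_set_def)
  then show Tx1: "T x1 \<noteq> 0" using T by auto
  fix f g u assume f: "supporting_functional (T x1) f" and g: "supporting_functional (T x1) g"
  define w where "w = u - (f u / norm T) *\<^sub>R T x1"
  have fw: "f w = 0" and gw: "g w = g u - f u"
    using supporting_functional_linear(2,4)[OF f] supporting_functional_linear(2,4)[OF g]
      supporting_functionalD(3)[OF f] supporting_functionalD(3)[OF g] unit T
    by (simp_all add: w_def)
  obtain \<phi> where \<phi>: "supporting_functional x1 \<phi>" using supporting_functional_exists by blast
  note \<phi>_bl = supporting_functionalD(1)[OF \<phi>]
  have A: "rank_one \<phi> w x1 = w"
    using supporting_functionalD(3)[OF \<phi>] unit by (simp add: rank_one_apply[OF \<phi>_bl])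
  have "birkhoff_orth T (rank_one \<phi> w)"
    by (rule birkhoff_orth_of_support_value[OF x1 f]) (simp add: A fw)
  moreover obtain s where s: "compatible_sip s" "\<And>v. s v (T x1) = norm (T x1) * g v"
    using compatible_sip_exists[OF Tx1 g] by blast
  ultimately have "norm (T x1) * g w = 0"
    using zero[OF rank_one_compact[OF \<phi>_bl, of w] _ s(1)] by (simp add: A s(2))
  then show "f u = g u" using Tx1 gw by simp
qed

lemma sip_orthogonality_imp_attain_pair:
  fixes T :: "'a::real_normed_vector \<Rightarrow>\<^sub>L 'b::real_normed_vector"
  assumes refl: "reflexive_space TYPE('a)" and T: "T \<in> compact_ops" "T \<noteq> 0"
    and orth_iff: "\<forall>A\<in>compact_ops. birkhoff_orth T A \<longleftrightarrow>
      (\<forall>s xs l. compatible_sip s \<longrightarrow> norming_seq T xs \<longrightarrow>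
         subseq_limit (\<lambda>n. s (A (xs n)) (T (xs n))) l \<longrightarrow> l = 0)"
  shows "\<exists>x0. norm x0 = 1 \<and> norm_attain_set T = {x0, - x0} \<and> smooth_point_in UNIV (T x0)"
proof -
  have zero: "s (A x) (T x) = 0"
    if "A \<in> compact_ops" "birkhoff_orth T A" "compatible_sip s" "x \<in> norm_attain_set T" for A s x
    using orth_iff that constant_norming_seq[OF that(4)] subseq_limit_const[of "s (A x) (T x)"]
    by blast
  obtain x1 where x1: "x1 \<in> norm_attain_set T" using norm_attain_set_nonempty[OF refl T] by blast
  then have unit: "norm x1 = 1" "norm (T x1) = norm T" by (simp_all add: norm_attain_set_def)
  then have Tx1: "T x1 \<noteq> 0" using T(2) by auto
  obtain f1 where f1: "supporting_functional (T x1) f1" using supporting_functional_exists by blast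
  have "norm_attain_set T = {x1, - x1}"
  proof (rule norm_attain_set_eq_pairI[OF x1])
    fix x2 and \<phi> :: "'a \<Rightarrow> real"
    assume x2: "x2 \<in> norm_attain_set T" and \<phi>: "bounded_linear \<phi>" "\<phi> x1 = 0" "\<phi> x2 = 1"
    have "birkhoff_orth T (rank_one \<phi> (T x2))"
      by (rule birkhoff_orth_of_support_value[OF x1 f1])
         (simp add: rank_one_apply[OF \<phi>(1)] \<phi>(2) supporting_functional_linear(5)[OF f1])
    moreover obtain s :: "'b \<Rightarrow> 'b \<Rightarrow> real" where s: "compatible_sip s"
      using compatible_sip_exists[OF Tx1 f1] by blast
    ultimately have "s (T x2) (T x2) = 0"
      using zero[OF rank_one_compact[OF \<phi>(1)] _ _ x2] by (simp add: rank_one_apply[OF \<phi>(1)] \<phi>(3))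
    then show False using compatible_sipD(4)[OF s] x2 T(2) by (simp add: norm_attain_set_def)
  qed
  moreover have "smooth_point_in UNIV (T x1)"
    using smooth_point_of_sip_orthogonality[OF x1 T(2)] zero[OF _ _ _ x1] by blast
  ultimately show ?thesis using unit by blast
qed

theorem theorem3p1:
  fixes T :: "'a::banach \<Rightarrow>\<^sub>L 'b::real_normed_vector"
  assumes "reflexive_space TYPE('a)"
    and "T \<in> compact_ops" and "T \<noteq> 0"
  shows "(smooth_point_in compact_ops T \<longleftrightarrow>
           (\<exists>x0. norm x0 = 1 \<and> norm_attain_set T = {x0, -x0} \<and> smooth_point_in UNIV (T x0)))
       \<and> ((\<exists>x0. norm x0 = 1 \<and> norm_attain_set T = {x0, -x0} \<and> smooth_point_in UNIV (T x0)) \<longleftrightarrow>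
           (\<forall>A\<in>compact_ops. birkhoff_orth T A \<longleftrightarrow>
              (\<forall>s xs l. compatible_sip s \<longrightarrow> norming_seq T xs \<longrightarrow>
                 subseq_limit (\<lambda>n. s (A (xs n)) (T (xs n))) l \<longrightarrow> l = 0)))"
    (is "(?i \<longleftrightarrow> ?ii) \<and> (?ii \<longleftrightarrow> ?iii)")
proof -
  have "?i \<and> ?iii" if ?ii
  proof -
    from \<open>?ii\<close> obtain x0 where "norm_attain_set T = {x0, -x0}" "smooth_point_in UNIV (T x0)"
      by blast
    moreover obtain f0 where "supporting_functional (T x0) f0"
      using supporting_functional_exists by blast
    ultimately interpret smooth_norm_attainment T x0 f0
      using assms by unfold_locales
    show ?thesis using smooth_point_in_compact_ops birkhoff_orth_iff_sip_limits by blast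
  qed
  moreover have "?i \<Longrightarrow> ?ii" by (rule smooth_compact_ops_imp_attain_pair[OF assms])
  moreover have "?iii \<Longrightarrow> ?ii" by (rule sip_orthogonality_imp_attain_pair[OF assms])
  ultimately show ?thesis by blast
qed

end
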